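(* Let $S$ be a hyperbolic Riemann surface with universal cover $\mathbb H^+$ and deck group action $\rho_{can}:\pi_1(S,x_0)\to PSL(2,\mathbb R)$, and let $T^1\mathcal F_{can}=(T^1\mathbb H^+\times\mathbb CP^1)/\pi_1(S,x_0)$ with action $\gamma\cdot(v,z)=(\rho_{can}(\gamma)_*v,\rho_{can}(\gamma)z)$. Let $X_{can}$ be the generator of the foliated geodesic flow (induced by $(X,0)$, $X$ the geodesic flow generator on $T^1\mathbb H^+$) and $Y$ the vertical vector field induced by $\tilde Y$. Then the vector field $Z=X_{can}+Y$ is tangent to the diagonal $\Delta_*(T^1S)\subset T^1\mathcal F_{can}$.
   Context: Let $\iota:\mathbb H^+\to\mathbb CP^1$ be the inclusion. For $v\in T^1\mathbb H^+$ based at $p$, $\tilde\sigma^\pm(v)\in\partial\mathbb H^+$ are the forward/backward endpoints of the geodesic tangent to $v$, and $Y_v$ is the holomorphic vector field on $\mathbb CP^1$ vanishing at $\tilde\sigma^\pm(v)$ with $Y_v(\iota(p))=\iota_*(v)$; $\tilde Y(v,\cdot)=Y_v(\cdot)$. The diagonal $\Delta_*(T^1S)$ is the image in the quotient of $\{(v,\iota(p)):v\in T^1_p\mathbb H^+\}$. *)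

theory Defs
  imports "HOL-Analysis.Analysis"
begin

text \<open>The upper half plane is {p. Im p > 0} inside the affine chart C of CP^1,
  so the inclusion iota is the identity on this chart, and tangent vectors at points of C
  are complex numbers.  A unit tangent vector v in T^1 H^+ is a pair (p, w) of its base
  point p and its Euclidean vector w with hyperbolic length |w| / Im p = 1.\<close>

definition T1H :: "(complex \<times> complex) set" where
  "T1H = {(p, w). 0 < Im p \<and> cmod w = Im p}"

text \<open>Elements of SL(2,R) acting on H^+ by Moebius transformations (PSL(2,R) = SL(2,R)/{+-1}).\<close>

definition SL2R :: "(real \<times> real \<times> real \<times> real) set" where
  "SL2R = {(a, b, c, d). a * d - b * c = 1}"

fun mob :: "real \<times> real \<times> real \<times> real \<Rightarrow> complex \<Rightarrow> complex" where
  "mob (a, b, c, d) z = (of_real a * z + of_real b) / (of_real c * z + of_real d)"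

fun mob_deriv :: "real \<times> real \<times> real \<times> real \<Rightarrow> complex \<Rightarrow> complex" where
  "mob_deriv (a, b, c, d) z = 1 / (of_real c * z + of_real d)^2"

definition push :: "real \<times> real \<times> real \<times> real \<Rightarrow> complex \<times> complex \<Rightarrow> complex \<times> complex" where
  "push g v = (mob g (fst v), mob_deriv g (fst v) * snd v)"

text \<open>Geodesic flow on T^1 H^+: the unit-speed geodesic through the upward vector at i is
  t \<mapsto> i e^t; for general v write v = g_* (i, i) with g in PSL(2,R) and transport.\<close>
definition geo_flow :: "real \<Rightarrow> complex \<times> complex \<Rightarrow> complex \<times> complex" where
  "geo_flow t v = (let g = (SOME g. g \<in> SL2R \<and> push g (\<i>, \<i>) = v)
                   in push g (\<i> * of_real (exp t), \<i> * of_real (exp t)))"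

definition geo_gen :: "complex \<times> complex \<Rightarrow> complex \<times> complex" where
  "geo_gen v = vector_derivative (\<lambda>t. geo_flow t v) (at 0)"

text \<open>Points of CP^1 = C \<union> {\<infinity>} are represented as complex option (None = \<infinity>).
  Forward/backward endpoints of the geodesic tangent to v, as limits of its base point.\<close>
definition geo_endpoint :: "real filter \<Rightarrow> complex \<times> complex \<Rightarrow> complex option" where
  "geo_endpoint F v =
     (if filterlim (\<lambda>t. fst (geo_flow t v)) at_infinity F then None
      else Some (THE e. ((\<lambda>t. fst (geo_flow t v)) \<longlongrightarrow> e) F))"

definition sigma_plus :: "complex \<times> complex \<Rightarrow> complex option" where
  "sigma_plus v = geo_endpoint at_top v"

definition sigma_minus :: "complex \<times> complex \<Rightarrow> complex option" where
  "sigma_minus v = geo_endpoint at_bot v"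

text \<open>Holomorphic vector fields on CP^1: in the affine chart z they are exactly
  (a + b z + c z^2) d/dz; in the chart w = 1/z at \<infinity> the field is -(c + b w + a w^2) d/dw.\<close>
type_synonym hvf = "complex \<times> complex \<times> complex"

fun hvf_eval :: "hvf \<Rightarrow> complex \<Rightarrow> complex" where
  "hvf_eval (a, b, c) z = a + b * z + c * z^2"

fun hvf_vanishes_at :: "hvf \<Rightarrow> complex option \<Rightarrow> bool" where
  "hvf_vanishes_at (a, b, c) None = (c = 0)"
| "hvf_vanishes_at Y (Some e) = (hvf_eval Y e = 0)"

definition Yv :: "complex \<times> complex \<Rightarrow> hvf" where
  "Yv v = (THE Y. hvf_vanishes_at Y (sigma_plus v) \<and> hvf_vanishes_at Y (sigma_minus v)
                  \<and> hvf_eval Y (fst v) = snd v)"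

definition Ytilde :: "complex \<times> complex \<Rightarrow> complex \<Rightarrow> complex" where
  "Ytilde v z = hvf_eval (Yv v) z"

text \<open>The lift of Z = X_can + Y to T^1 H^+ \<times> CP^1 (over the affine chart): (X, 0) + (0, \tilde Y).\<close>
definition Zfield :: "(complex \<times> complex) \<times> complex \<Rightarrow> (complex \<times> complex) \<times> complex" where
  "Zfield q = (geo_gen (fst q), Ytilde (fst q) (snd q))"

definition diag :: "((complex \<times> complex) \<times> complex) set" where
  "diag = {(v, fst v) | v. v \<in> T1H}"

definition tangent_to :: "'a::real_normed_vector set \<Rightarrow> 'a \<Rightarrow> 'a \<Rightarrow> bool" where
  "tangent_to M q u \<longleftrightarrow> (\<exists>c e. 0 < e \<and> c 0 = q \<and> (\<forall>t. \<bar>t\<bar> < e \<longrightarrow> c t \<in> M)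
                              \<and> (c has_vector_derivative u) (at 0))"

end

theory Submission
  imports Defs
begin

text \<open>Write v as the image of the upward unit vector at i under g = (a, b; c, d) in SL(2,R).
  The geodesic through v is the image under g of the vertical geodesic i exp t, so its endpoints
  are g(infinity) = [a : c] and g(0) = [b : d], and its base point moves with velocity equal to
  the flowed vector. A holomorphic vector field on CP^1 is a quadratic form in homogeneous
  coordinates, hence determined by two of its zeros and its value at a third point; so Y_v is
  well defined and Y_v(p) = v. Hence the curve of pairs (flowed
  vector, its base point) stays in the lifted diagonal, and its velocity at time 0 is
  (X(v), v) = (X(v), Y_v(p)) = Z.\<close>

lemma mob_denom_nonzero:
  assumes "a * d - b * c = 1" "Im z \<noteq> 0"
  shows "of_real c * z + of_real d \<noteq> 0"
proof
  assume "of_real c * z + of_real d = 0"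
  hence "c * Im z = 0" "c * Re z + d = 0" by (auto simp: complex_eq_iff)
  thus False using assms by auto
qed

lemma of_real_diff_mult_of_real_nonzero:
  assumes "a \<noteq> 0 \<or> c \<noteq> 0" "Im p \<noteq> 0"
  shows "of_real a - p * of_real c \<noteq> 0"
proof
  assume "of_real a - p * of_real c = 0"
  hence "c * Im p = 0" "a = c * Re p" by (auto simp: complex_eq_iff)
  thus False using assms by auto
qed

lemma Im_mob:
  assumes "a * d - b * c = 1"
  shows "Im (mob (a, b, c, d) z) = Im z / (cmod (of_real c * z + of_real d))\<^sup>2"
proof -
  have "Im (of_real a * z + of_real b) * Re (of_real c * z + of_real d)
        - Re (of_real a * z + of_real b) * Im (of_real c * z + of_real d) = (a * d - b * c) * Im z"
    by (simp add: algebra_simps)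
  thus ?thesis using assms by (simp add: Im_divide')
qed

lemma push_in_T1H:
  assumes "g \<in> SL2R" "v \<in> T1H"
  shows "push g v \<in> T1H"
proof -
  obtain a b c d where g: "g = (a, b, c, d)" by (cases g)
  obtain p w where v: "v = (p, w)" by (cases v)
  have det: "a * d - b * c = 1" and p: "0 < Im p" and w: "cmod w = Im p"
    using assms g v by (auto simp: SL2R_def T1H_def)
  have "of_real c * p + of_real d \<noteq> 0" using mob_denom_nonzero[OF det] p by simp
  thus ?thesis using Im_mob[OF det] p w g v
    by (simp add: push_def T1H_def norm_divide norm_mult norm_power)
qed

lemma mob_has_field_derivative:
  assumes "a * d - b * c = 1" "of_real c * z + of_real d \<noteq> 0"
  shows "(mob (a, b, c, d) has_field_derivative mob_deriv (a, b, c, d) z) (at z)"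
proof -
  have "complex_of_real a * of_real d - of_real b * of_real c = 1"
    using assms(1) by (metis of_real_1 of_real_diff of_real_mult)
  hence "of_real a * (of_real c * z + of_real d) - (of_real a * z + of_real b) * of_real c
         = (1 :: complex)"
    by (simp add: algebra_simps)
  moreover have "((\<lambda>z. (of_real a * z + of_real b) / (of_real c * z + of_real d)) has_field_derivative
      (of_real a * (of_real c * z + of_real d) - (of_real a * z + of_real b) * of_real c)
      / (of_real c * z + of_real d)\<^sup>2) (at z)"
    using assms(2) by (auto intro!: derivative_eq_intros simp: power2_eq_square)
  ultimately show ?thesis by (simp add: mob.simps[abs_def])
qed

lemma ex_SL2R_push_ii:
  assumes "v \<in> T1H"
  shows "\<exists>g \<in> SL2R. push g (\<i>, \<i>) = v"
proof -
  obtain p w where v: "v = (p, w)" by (cases v)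
  have p: "0 < Im p" and w: "cmod w = Im p" using assms v by (auto simp: T1H_def)
  define s where "s = csqrt (\<i> / w)"
  have s2: "s\<^sup>2 = \<i> / w" unfolding s_def by simp
  have "w \<noteq> 0" using p w by auto
  hence "s \<noteq> 0" using s2 by auto
  have "(Re s)\<^sup>2 + (Im s)\<^sup>2 = 1 / Im p"
    by (metis s2 w norm_power norm_divide norm_ii cmod_power2)
  hence det: "Im (p * s) * Re s - Re (p * s) * Im s = 1"
    using p by (simp add: field_simps power2_eq_square)
  have cd: "of_real (Im s) * \<i> + of_real (Re s) = s" by (simp add: complex_eq_iff)
  have ab: "of_real (Im (p * s)) * \<i> + of_real (Re (p * s)) = p * s" by (simp add: complex_eq_iff)
  have "push (Im (p * s), Re (p * s), Im s, Re s) (\<i>, \<i>) = (p, \<i> / s\<^sup>2)"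
    using ab cd \<open>s \<noteq> 0\<close> by (simp add: push_def mult.commute)
  also have "\<i> / s\<^sup>2 = w" using s2 \<open>w \<noteq> 0\<close> by simp
  finally show ?thesis
    using det v by (intro bexI[of _ "(Im (p * s), Re (p * s), Im s, Re s)"]) (auto simp: SL2R_def)
qed

definition frame :: "complex \<times> complex \<Rightarrow> real \<times> real \<times> real \<times> real" where
  "frame v = (SOME g. g \<in> SL2R \<and> push g (\<i>, \<i>) = v)"

lemma frame:
  assumes "v \<in> T1H"
  shows "frame v \<in> SL2R" "push (frame v) (\<i>, \<i>) = v"
  using someI_ex[OF ex_SL2R_push_ii[OF assms, unfolded Bex_def]] by (simp_all add: frame_def)

lemma geo_flow_frame: "geo_flow t v = push (frame v) (\<i> * of_real (exp t), \<i> * of_real (exp t))"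
  by (simp add: geo_flow_def frame_def)

lemma geo_flow_0:
  assumes "v \<in> T1H"
  shows "geo_flow 0 v = v"
  using frame(2)[OF assms] by (simp add: geo_flow_frame)

lemma geo_flow_in_T1H:
  assumes "v \<in> T1H"
  shows "geo_flow t v \<in> T1H"
  unfolding geo_flow_frame by (rule push_in_T1H[OF frame(1)[OF assms]]) (simp add: T1H_def norm_mult)

lemma has_vector_derivative_vertical_geodesic:
  "((\<lambda>t. \<i> * of_real (exp t)) has_vector_derivative \<i> * of_real (exp t)) (at t)"
  by (auto intro!: derivative_eq_intros simp: has_real_derivative_iff_has_vector_derivative[symmetric])

lemma geo_flow_base_has_vector_derivative:
  assumes "v \<in> T1H"
  shows "((\<lambda>t. fst (geo_flow t v)) has_vector_derivative snd (geo_flow t v)) (at t)"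
proof -
  obtain a b c d where g: "frame v = (a, b, c, d)" by (cases "frame v")
  have det: "a * d - b * c = 1" using frame(1)[OF assms] g by (simp add: SL2R_def)
  have "of_real c * (\<i> * of_real (exp t)) + of_real d \<noteq> 0"
    by (rule mob_denom_nonzero[OF det]) simp
  from field_vector_diff_chain_at[OF has_vector_derivative_vertical_geodesic
      mob_has_field_derivative[OF det this]]
  show ?thesis by (simp add: geo_flow_frame g push_def o_def mult.commute)
qed

lemma geo_flow_differentiable:
  assumes "v \<in> T1H"
  shows "(\<lambda>t. geo_flow t v) differentiable at t"
proof -
  obtain a b c d where g: "frame v = (a, b, c, d)" by (cases "frame v")
  have det: "a * d - b * c = 1" using frame(1)[OF assms] g by (simp add: SL2R_def)
  let ?z = "\<i> * of_real (exp t)"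
  have "of_real c * ?z + of_real d \<noteq> 0" by (rule mob_denom_nonzero[OF det]) simp
  hence "\<exists>D. ((\<lambda>z. mob_deriv (a, b, c, d) z * z) has_field_derivative D) (at ?z)"
    by (auto intro!: derivative_eq_intros)
  then obtain D where "((\<lambda>z. mob_deriv (a, b, c, d) z * z) has_field_derivative D) (at ?z)" ..
  from field_vector_diff_chain_at[OF has_vector_derivative_vertical_geodesic this]
  have "(\<lambda>t. snd (geo_flow t v)) differentiable at t"
    by (auto intro: differentiableI_vector simp: geo_flow_frame g push_def o_def)
  moreover have "(\<lambda>t. fst (geo_flow t v)) differentiable at t"
    using differentiableI_vector[OF geo_flow_base_has_vector_derivative[OF assms]] .
  ultimately show ?thesis using differentiable_Pair by fastforce
qed

lemma tendsto_mob_at_infinity: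
  assumes "c \<noteq> 0"
  shows "(mob (a, b, c, d) \<longlongrightarrow> of_real a / of_real c) at_infinity"
proof -
  have "((\<lambda>z. (complex_of_real a + of_real b * inverse z) / (of_real c + of_real d * inverse z))
        \<longlongrightarrow> (of_real a + of_real b * 0) / (of_real c + of_real d * 0)) at_infinity"
    using assms by (intro tendsto_intros tendsto_inverse_0) auto
  moreover have "\<forall>\<^sub>F z in at_infinity. mob (a, b, c, d) z
      = (complex_of_real a + of_real b * inverse z) / (of_real c + of_real d * inverse z)"
    using eventually_not_equal_at_infinity[of 0]
  proof eventually_elim
    case (elim z)
    have "mob (a, b, c, d) z = ((complex_of_real a + of_real b * inverse z) * z)
                               / ((of_real c + of_real d * inverse z) * z)"
      using elim by (simp add: distrib_right mult.assoc add.commute)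
    thus ?case using elim by simp
  qed
  ultimately show ?thesis by (simp add: tendsto_cong)
qed

lemma filterlim_mob_at_infinity:
  assumes "a \<noteq> 0" "d \<noteq> 0"
  shows "filterlim (mob (a, b, 0, d)) at_infinity at_infinity"
proof -
  have "((\<lambda>z. (complex_of_real a + of_real b * inverse z) / of_real d)
        \<longlongrightarrow> (of_real a + of_real b * 0) / of_real d) at_infinity"
    using assms(2) by (intro tendsto_intros tendsto_inverse_0) auto
  hence "filterlim (\<lambda>z. (complex_of_real a + of_real b * inverse z) / of_real d * z) at_infinity at_infinity"
    using assms by (intro tendsto_mult_filterlim_at_infinity filterlim_ident) auto
  moreover have "\<forall>\<^sub>F z in at_infinity. (complex_of_real a + of_real b * inverse z) / of_real d * z
      = mob (a, b, 0, d) z"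
    using eventually_not_equal_at_infinity[of 0]
    by eventually_elim (simp add: field_simps assms(2))
  ultimately show ?thesis by (rule filterlim_mono_eventually[OF _ order_refl order_refl])
qed

lemma tendsto_mob_0:
  assumes "d \<noteq> 0"
  shows "(mob (a, b, c, d) \<longlongrightarrow> of_real b / of_real d) (at 0)"
proof -
  have "((\<lambda>z. (complex_of_real a * z + of_real b) / (of_real c * z + of_real d))
        \<longlongrightarrow> (of_real a * 0 + of_real b) / (of_real c * 0 + of_real d)) (at 0)"
    using assms by (intro tendsto_intros) auto
  thus ?thesis by (simp add: mob.simps[abs_def])
qed

lemma filterlim_mob_0:
  assumes "b \<noteq> 0" "c \<noteq> 0"
  shows "filterlim (mob (a, b, c, 0)) at_infinity (at 0)"
proof -
  have "((\<lambda>z. complex_of_real a * z + of_real b) \<longlongrightarrow> of_real a * 0 + of_real b) (at 0)"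
    by (intro tendsto_intros)
  moreover have "filterlim (\<lambda>z. of_real c * z) (at 0) (at (0 :: complex))"
    using assms(2) by (auto intro!: filterlim_atI tendsto_eq_intros eventually_at_filter[THEN iffD2])
  ultimately show ?thesis
    using assms(1) by (auto intro: filterlim_divide_at_infinity simp: mob.simps[abs_def])
qed

lemma filterlim_vertical_geodesic_at_top:
  "filterlim (\<lambda>t. \<i> * of_real (exp t)) at_infinity at_top"
  by (simp add: filterlim_at_infinity_conv_norm_at_top norm_mult exp_at_top)

lemma filterlim_vertical_geodesic_at_bot:
  "filterlim (\<lambda>t. \<i> * of_real (exp t)) (at 0) at_bot"
proof (rule filterlim_atI)
  show "((\<lambda>t. \<i> * complex_of_real (exp t)) \<longlongrightarrow> 0) at_bot"
    using tendsto_mult[OF tendsto_const tendsto_of_real[OF exp_at_bot], of \<i>] by simp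
qed simp

definition proj_point :: "complex \<Rightarrow> complex \<Rightarrow> complex option" where
  "proj_point u1 u2 = (if u2 = 0 then None else Some (u1 / u2))"

lemma geo_endpoint_eq_Some:
  assumes "F \<noteq> bot" "((\<lambda>t. fst (geo_flow t v)) \<longlongrightarrow> e) F"
  shows "geo_endpoint F v = Some e"
proof -
  have "(THE e'. ((\<lambda>t. fst (geo_flow t v)) \<longlongrightarrow> e') F) = e"
    using assms(2) by (rule the_equality) (rule tendsto_unique[OF assms(1) _ assms(2)])
  thus ?thesis using not_tendsto_and_filterlim_at_infinity[OF assms] by (auto simp: geo_endpoint_def)
qed

lemma geo_endpoint_eq_None:
  assumes "filterlim (\<lambda>t. fst (geo_flow t v)) at_infinity F"
  shows "geo_endpoint F v = None"
  using assms by (simp add: geo_endpoint_def)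

lemma fst_geo_flow_frame:
  "fst (geo_flow t v) = mob (frame v) (\<i> * of_real (exp t))"
  by (simp add: geo_flow_frame push_def)

lemma sigma_plus_frame:
  assumes "v \<in> T1H" "frame v = (a, b, c, d)"
  shows "sigma_plus v = proj_point (of_real a) (of_real c)"
proof (cases "c = 0")
  case True
  have "a \<noteq> 0" "d \<noteq> 0" using frame(1)[OF assms(1)] assms(2) True by (auto simp: SL2R_def)
  from filterlim_compose[OF filterlim_mob_at_infinity[OF this] filterlim_vertical_geodesic_at_top]
  show ?thesis using assms(2) True
    by (simp add: sigma_plus_def geo_endpoint_eq_None fst_geo_flow_frame proj_point_def)
next
  case False
  from filterlim_compose[OF tendsto_mob_at_infinity[OF False] filterlim_vertical_geodesic_at_top]
  show ?thesis using assms(2) False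
    by (simp add: sigma_plus_def geo_endpoint_eq_Some fst_geo_flow_frame proj_point_def)
qed

lemma sigma_minus_frame:
  assumes "v \<in> T1H" "frame v = (a, b, c, d)"
  shows "sigma_minus v = proj_point (of_real b) (of_real d)"
proof (cases "d = 0")
  case True
  have "b \<noteq> 0" "c \<noteq> 0" using frame(1)[OF assms(1)] assms(2) True by (auto simp: SL2R_def)
  from filterlim_compose[OF filterlim_mob_0[OF this] filterlim_vertical_geodesic_at_bot]
  show ?thesis using assms(2) True
    by (simp add: sigma_minus_def geo_endpoint_eq_None fst_geo_flow_frame proj_point_def)
next
  case False
  from filterlim_compose[OF tendsto_mob_0[OF False] filterlim_vertical_geodesic_at_bot]
  show ?thesis using assms(2) False
    by (simp add: sigma_minus_def geo_endpoint_eq_Some fst_geo_flow_frame proj_point_def)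
qed

lemma hvf_vanishes_at_proj_point:
  assumes "u1 \<noteq> 0 \<or> u2 \<noteq> 0"
  shows "hvf_vanishes_at (x, y, z) (proj_point u1 u2) \<longleftrightarrow> x * u2\<^sup>2 + y * (u1 * u2) + z * u1\<^sup>2 = 0"
proof (cases "u2 = 0")
  case False
  have "x + y * (u1 / u2) + z * (u1 / u2)\<^sup>2 = (x * u2\<^sup>2 + y * (u1 * u2) + z * u1\<^sup>2) / u2\<^sup>2"
    using False by (simp add: field_simps power2_eq_square)
  thus ?thesis using False by (simp add: proj_point_def)
qed (use assms in \<open>simp add: proj_point_def\<close>)

lemma binary_quadratic_form_eq_0:
  fixes x y z :: complex
  assumes "x * u2\<^sup>2 + y * (u1 * u2) + z * u1\<^sup>2 = 0"
      and "x * v2\<^sup>2 + y * (v1 * v2) + z * v1\<^sup>2 = 0"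
      and "x * r2\<^sup>2 + y * (r1 * r2) + z * r1\<^sup>2 = 0"
      and "(u1 * v2 - v1 * u2) * (u1 * r2 - r1 * u2) * (v1 * r2 - r1 * v2) \<noteq> 0"
  shows "x = 0 \<and> y = 0 \<and> z = 0"
proof -
  let ?E = "\<lambda>s1 s2. x * s2\<^sup>2 + y * (s1 * s2) + z * s1\<^sup>2"
  define D where "D = (v1 * u2 - u1 * v2) * (r1 * u2 - u1 * r2) * (r1 * v2 - v1 * r2)"
  have "D = - ((u1 * v2 - v1 * u2) * (u1 * r2 - r1 * u2) * (v1 * r2 - r1 * v2))"
    unfolding D_def by algebra
  hence "D \<noteq> 0" using assms(4) by simp
  \<comment> \<open>Cramer's rule: D is the Vandermonde-type determinant of the system and the
    coefficients below are its cofactors.\<close>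
  have "D * x = (v1 * v2 * r1\<^sup>2 - v1\<^sup>2 * r1 * r2) * ?E u1 u2
      - (u1 * u2 * r1\<^sup>2 - u1\<^sup>2 * r1 * r2) * ?E v1 v2 + (u1 * u2 * v1\<^sup>2 - u1\<^sup>2 * v1 * v2) * ?E r1 r2"
    unfolding D_def by algebra
  hence "x = 0" using assms(1-3) \<open>D \<noteq> 0\<close> by simp
  have "D * y = - (v2\<^sup>2 * r1\<^sup>2 - v1\<^sup>2 * r2\<^sup>2) * ?E u1 u2
      + (u2\<^sup>2 * r1\<^sup>2 - u1\<^sup>2 * r2\<^sup>2) * ?E v1 v2 - (u2\<^sup>2 * v1\<^sup>2 - u1\<^sup>2 * v2\<^sup>2) * ?E r1 r2"
    unfolding D_def by algebra
  hence "y = 0" using assms(1-3) \<open>D \<noteq> 0\<close> by simp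
  have "D * z = (v2\<^sup>2 * r1 * r2 - v1 * v2 * r2\<^sup>2) * ?E u1 u2
      - (u2\<^sup>2 * r1 * r2 - u1 * u2 * r2\<^sup>2) * ?E v1 v2 + (u2\<^sup>2 * v1 * v2 - u1 * u2 * v2\<^sup>2) * ?E r1 r2"
    unfolding D_def by algebra
  hence "z = 0" using assms(1-3) \<open>D \<noteq> 0\<close> by simp
  with \<open>x = 0\<close> \<open>y = 0\<close> show ?thesis by simp
qed

lemma ex1_hvf_vanishing_interpolating:
  fixes u1 u2 v1 v2 p w :: complex
  assumes indep: "(u1 * v2 - v1 * u2) * (u1 - p * u2) * (v1 - p * v2) \<noteq> 0"
  shows "\<exists>!Y. hvf_vanishes_at Y (proj_point u1 u2) \<and> hvf_vanishes_at Y (proj_point v1 v2)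
              \<and> hvf_eval Y p = w"
proof -
  have u: "u1 \<noteq> 0 \<or> u2 \<noteq> 0" and v: "v1 \<noteq> 0 \<or> v2 \<noteq> 0" using indep by auto
  let ?Q = "\<lambda>(x, y, z) s1 s2. x * s2\<^sup>2 + y * (s1 * s2) + z * s1\<^sup>2"
  have P_iff: "(hvf_vanishes_at Y (proj_point u1 u2) \<and> hvf_vanishes_at Y (proj_point v1 v2)
      \<and> hvf_eval Y p = w) \<longleftrightarrow> ?Q Y u1 u2 = 0 \<and> ?Q Y v1 v2 = 0 \<and> ?Q Y p 1 = w" for Y
    by (cases Y) (simp add: hvf_vanishes_at_proj_point[OF u] hvf_vanishes_at_proj_point[OF v]
        algebra_simps)
  define k where "k = w / ((u1 - p * u2) * (v1 - p * v2))"
  \<comment> \<open>The quadratic form of Y0 is k times the product of the linear forms vanishing at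
    the two points.\<close>
  define Y0 where "Y0 = (k * u1 * v1, - k * (u2 * v1 + u1 * v2), k * u2 * v2)"
  have Q_Y0: "?Q Y0 s1 s2 = k * (u1 * s2 - s1 * u2) * (v1 * s2 - s1 * v2)" for s1 s2
    by (simp add: Y0_def power2_eq_square algebra_simps)
  have "?Q Y0 u1 u2 = 0 \<and> ?Q Y0 v1 v2 = 0 \<and> ?Q Y0 p 1 = w"
    unfolding Q_Y0 k_def using indep by simp
  moreover have "Y = Y'" if "?Q Y u1 u2 = 0 \<and> ?Q Y v1 v2 = 0 \<and> ?Q Y p 1 = w"
      and "?Q Y' u1 u2 = 0 \<and> ?Q Y' v1 v2 = 0 \<and> ?Q Y' p 1 = w" for Y Y'
  proof -
    obtain x y z x' y' z' where Y: "Y = (x, y, z)" and Y': "Y' = (x', y', z')"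
      by (cases Y, cases Y')
    have diff: "?Q (x - x', y - y', z - z') s1 s2 = ?Q Y s1 s2 - ?Q Y' s1 s2" for s1 s2
      by (simp add: Y Y' algebra_simps)
    have "x - x' = 0 \<and> y - y' = 0 \<and> z - z' = 0"
      by (rule binary_quadratic_form_eq_0[of _ u2 _ u1 _ v2 v1 1 p])
        (use that indep diff[of u1 u2] diff[of v1 v2] diff[of p 1] in simp_all)
    thus ?thesis by (simp add: Y Y')
  qed
  ultimately show ?thesis unfolding P_iff by blast
qed

lemma hvf_eval_Yv_base:
  assumes "v \<in> T1H"
  shows "hvf_eval (Yv v) (fst v) = snd v"
proof -
  obtain a b c d where g: "frame v = (a, b, c, d)" by (cases "frame v")
  have det: "a * d - b * c = 1" using frame(1)[OF assms] g by (simp add: SL2R_def)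
  have p: "Im (fst v) \<noteq> 0" using assms by (auto simp: T1H_def)
  have "of_real a - fst v * of_real c \<noteq> 0"
    using det p by (intro of_real_diff_mult_of_real_nonzero) auto
  moreover have "of_real b - fst v * of_real d \<noteq> 0"
    using det p by (intro of_real_diff_mult_of_real_nonzero) auto
  moreover have "complex_of_real a * of_real d - of_real b * of_real c = 1"
    using det by (metis of_real_1 of_real_diff of_real_mult)
  ultimately have "(of_real a * of_real d - of_real b * of_real c) * (of_real a - fst v * of_real c)
      * (of_real b - fst v * of_real d) \<noteq> 0"
    by simp
  from theI'[OF ex1_hvf_vanishing_interpolating[OF this, of "snd v"]]
  show ?thesis
    by (simp add: Yv_def sigma_plus_frame[OF assms g] sigma_minus_frame[OF assms g])
qed

theorem proposition7p7:
  shows "\<forall>q \<in> diag. tangent_to diag q (Zfield q)"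
proof
  fix q assume "q \<in> diag"
  then obtain v where v: "v \<in> T1H" and q: "q = (v, fst v)" by (auto simp: diag_def)
  define C where "C t = (geo_flow t v, fst (geo_flow t v))" for t
  have "C 0 = q" using geo_flow_0[OF v] by (simp add: C_def q)
  moreover have "C t \<in> diag" for t
    unfolding C_def diag_def using geo_flow_in_T1H[OF v] by blast
  moreover have "(C has_vector_derivative (geo_gen v, snd v)) (at 0)"
    unfolding C_def geo_gen_def
    using geo_flow_differentiable[OF v] geo_flow_base_has_vector_derivative[OF v, of 0]
    by (auto intro!: has_vector_derivative_Pair simp: vector_derivative_works geo_flow_0[OF v])
  moreover have "Zfield q = (geo_gen v, snd v)"
    using hvf_eval_Yv_base[OF v] by (simp add: Zfield_def Ytilde_def q)
  ultimately show "tangent_to diag q (Zfield q)"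
    unfolding tangent_to_def by (intro exI[of _ C] exI[of _ 1]) auto
qed

end
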